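(* Let $A$ be a fixed $s \times t$ matrix and let $A'$ be the $s' \times t$ matrix obtained from $A$ by deleting rows that are equal to their predecessors in $A$. There exist polynomials $p_1,p_2$ (depending only on $A$) such that for every $\epsilon > 0$, with $n_1 = p_1(\epsilon^{-1})$ and $\tau = 1/p_2(\epsilon^{-1})$, for every $n \geq n_1$, every $n \times n$ matrix $M$ that contains $\epsilon n^{s'+t}$ copies of $A'$ also contains $\tau n^{s+t}$ copies of $A$.
   Context: Matrices are over a fixed finite alphabet, with ordered rows and columns. A submatrix is obtained by deleting rows and columns while preserving order; a copy of a matrix $B$ in $M$ is a submatrix of $M$ equal to $B$. The predecessor of a row in $A$ is the row immediately preceding it in $A$. *)

theory Defs
  imports "HOL-Computational_Algebra.Polynomial"
begin

text \<open>A matrix over alphabet 'a is a function nat => nat => 'a; its dimensions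
are carried separately. Only entries with indices below the dimensions matter.\<close>

definition copies ::
  "(nat \<Rightarrow> nat \<Rightarrow> 'a) \<Rightarrow> nat \<Rightarrow> nat \<Rightarrow> (nat \<Rightarrow> nat \<Rightarrow> 'a) \<Rightarrow> nat \<Rightarrow> nat" where
  "copies B s t M n = card {(R, C). R \<subseteq> {..<n} \<and> card R = s \<and> C \<subseteq> {..<n} \<and> card C = t \<and>
      (\<forall>i<s. \<forall>j<t. M (sorted_list_of_set R ! i) (sorted_list_of_set C ! j) = B i j)}"

definition kept_rows :: "(nat \<Rightarrow> nat \<Rightarrow> 'a) \<Rightarrow> nat \<Rightarrow> nat \<Rightarrow> nat list" where
  "kept_rows A s t = filter (\<lambda>i. i = 0 \<or> (\<exists>j<t. A i j \<noteq> A (i - 1) j)) [0..<s]"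

definition dedup_rows :: "(nat \<Rightarrow> nat \<Rightarrow> 'a) \<Rightarrow> nat \<Rightarrow> nat \<Rightarrow> (nat \<Rightarrow> nat \<Rightarrow> 'a)" where
  "dedup_rows A s t = (\<lambda>i j. A (kept_rows A s t ! i) j)"

definition dedup_height :: "(nat \<Rightarrow> nat \<Rightarrow> 'a) \<Rightarrow> nat \<Rightarrow> nat \<Rightarrow> nat" where
  "dedup_height A s t = length (kept_rows A s t)"

end

theory Submission
  imports Defs "HOL-Analysis.Convex"
begin

text \<open>\<open>A\<close> arises from \<open>A'\<close> by at most \<open>s\<close> successive duplications of a row, so it suffices
  to show that duplicating row \<open>i\<close> of an \<open>h \<times> t\<close> matrix \<open>B\<close> with \<open>\<delta> n^(h+t)\<close> copies yields
  at least \<open>(\<delta>^2/4) n^(h+1+t)\<close> copies once \<open>n \<ge> 4/\<delta>\<close>. Group the copies of \<open>B\<close> by their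
  columns and all their rows except the \<open>i\<close>-th. There are at most \<open>n^(h-1+t)\<close> groups, so by
  Cauchy-Schwarz many pairs of copies lie in a common group, and a pair whose \<open>i\<close>-th rows are in
  increasing order merges into a copy of \<open>B\<close> with row \<open>i\<close> doubled. Each step squares the
  density, so after \<open>m\<close> steps it is \<open>4 (\<epsilon>/4)^(2^m)\<close>, a polynomial in \<open>\<epsilon>\<close>.\<close>

section \<open>Copies as pairs of increasing index lists\<close>

definition increasing_lists :: "nat \<Rightarrow> nat \<Rightarrow> nat list set" where
  "increasing_lists k n = {xs. sorted_wrt (<) xs \<and> length xs = k \<and> set xs \<subseteq> {..<n}}"

definition copy_lists ::
  "(nat \<Rightarrow> nat \<Rightarrow> 'a) \<Rightarrow> nat \<Rightarrow> nat \<Rightarrow> (nat \<Rightarrow> nat \<Rightarrow> 'a) \<Rightarrow> nat \<Rightarrow> (nat list \<times> nat list) set" where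
  "copy_lists B s t M n = {(xs, ys). xs \<in> increasing_lists s n \<and> ys \<in> increasing_lists t n \<and>
      (\<forall>i<s. \<forall>j<t. M (xs ! i) (ys ! j) = B i j)}"

lemma sorted_list_of_set_set_strict_sorted:
  "sorted_wrt (<) xs \<Longrightarrow> sorted_list_of_set (set xs) = xs"
  by (simp add: sorted_list_of_set_sort_remdups strict_sorted_iff distinct_remdups_id sorted_sort_id)

lemma finite_increasing_lists: "finite (increasing_lists k n)"
  by (rule finite_subset[of _ "{xs. set xs \<subseteq> {..<n} \<and> length xs = k}"])
     (auto simp: increasing_lists_def finite_lists_length_eq)

lemma finite_copy_lists: "finite (copy_lists B s t M n)"
  by (rule finite_subset[of _ "increasing_lists s n \<times> increasing_lists t n"])
     (auto simp: copy_lists_def finite_increasing_lists)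

lemma copies_eq_card_copy_lists: "copies B s t M n = card (copy_lists B s t M n)"
proof -
  let ?set2 = "\<lambda>(xs, ys). (set xs, set (ys :: nat list))"
  have inj: "inj_on ?set2 (copy_lists B s t M n)"
    by (rule inj_onI) (auto simp: copy_lists_def increasing_lists_def intro: strict_sorted_equal)
  have "{(R, C). R \<subseteq> {..<n} \<and> card R = s \<and> C \<subseteq> {..<n} \<and> card C = t \<and>
      (\<forall>i<s. \<forall>j<t. M (sorted_list_of_set R ! i) (sorted_list_of_set C ! j) = B i j)}
      = ?set2 ` copy_lists B s t M n"
  proof (intro equalityI subsetI)
    fix RC assume "RC \<in> {(R, C). R \<subseteq> {..<n} \<and> card R = s \<and> C \<subseteq> {..<n} \<and> card C = t \<and>
      (\<forall>i<s. \<forall>j<t. M (sorted_list_of_set R ! i) (sorted_list_of_set C ! j) = B i j)}"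
    then obtain R C where RC: "RC = (R, C)" "R \<subseteq> {..<n}" "card R = s" "C \<subseteq> {..<n}" "card C = t"
      "\<forall>i<s. \<forall>j<t. M (sorted_list_of_set R ! i) (sorted_list_of_set C ! j) = B i j" by blast
    have "finite R" "finite C" using RC(2,4) finite_subset by blast+
    then have "(sorted_list_of_set R, sorted_list_of_set C) \<in> copy_lists B s t M n"
      using RC by (simp add: copy_lists_def increasing_lists_def)
    moreover have "RC = ?set2 (sorted_list_of_set R, sorted_list_of_set C)"
      using RC(1) \<open>finite R\<close> \<open>finite C\<close> by simp
    ultimately show "RC \<in> ?set2 ` copy_lists B s t M n" by blast
  qed (auto simp: copy_lists_def increasing_lists_def sorted_list_of_set_set_strict_sorted
        strict_sorted_iff distinct_card)
  then show ?thesis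
    unfolding copies_def by (simp add: card_image[OF inj])
qed

lemma copies_cong:
  assumes "\<And>i j. i < s \<Longrightarrow> j < t \<Longrightarrow> B i j = B' i j"
  shows "copies B s t M n = copies B' s t M n"
  unfolding copies_def using assms by (intro arg_cong[where f = card] Collect_cong) auto


section \<open>Counting pairs with a common key\<close>

lemma card_square_le_card_keys_mult_pairs:
  fixes key :: "'a \<Rightarrow> 'k" and e :: "'a \<Rightarrow> 'b::linorder"
  assumes S: "finite S"
    and fiber_inj: "\<And>x y. x \<in> S \<Longrightarrow> y \<in> S \<Longrightarrow> key x = key y \<Longrightarrow> e x = e y \<Longrightarrow> x = y"
  shows "card S ^ 2 \<le> card (key ` S) * (2 * card {(x, y) \<in> S \<times> S. key x = key y \<and> e x < e y} + card S)"
proof -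
  define F where "F k = {x \<in> S. key x = k}" for k
  define P where "P = {(x, y) \<in> S \<times> S. key x = key y}"
  define Q where "Q = {(x, y) \<in> S \<times> S. key x = key y \<and> e x < e y}"
  have finF: "finite (F k)" for k using S by (simp add: F_def)
  have "card S = (\<Sum>k\<in>key ` S. card (F k))"
    using sum.image_gen[OF S, of "\<lambda>_. 1 :: nat" key] by (simp add: F_def)
  moreover have "card P = (\<Sum>k\<in>key ` S. card (F k) ^ 2)"
  proof -
    have "P = (SIGMA x:S. F (key x))" by (auto simp: P_def F_def)
    then have "card P = (\<Sum>x\<in>S. card (F (key x)))" using S finF by simp
    also have "\<dots> = (\<Sum>k\<in>key ` S. \<Sum>x\<in>F k. card (F k))"
      using sum.image_gen[OF S, of "\<lambda>x. card (F (key x))" key] by (simp add: F_def)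
    finally show ?thesis by (simp add: power2_eq_square)
  qed
  ultimately have CS: "card S ^ 2 \<le> card (key ` S) * card P"
    using sum_squared_le_sum_of_squares[of "\<lambda>k. real (card (F k))" "key ` S"]
    by (simp flip: of_nat_power of_nat_mult of_nat_sum add: mult.commute)
  have "P \<subseteq> Q \<union> prod.swap ` Q \<union> (\<lambda>x. (x, x)) ` S"
    using fiber_inj by (fastforce simp: P_def Q_def neq_iff)
  moreover have "finite Q"
    unfolding Q_def by (rule finite_subset[of _ "S \<times> S"]) (use S in auto)
  ultimately have "card P \<le> card Q + card (prod.swap ` Q) + card ((\<lambda>x. (x, x)) ` S)"
    using S by (meson card_Un_le card_mono finite_UnI finite_imageI le_trans add_le_mono order_refl)
  also have "\<dots> \<le> 2 * card Q + card S"
    using card_image_le[OF \<open>finite Q\<close>, of prod.swap] card_image_le[OF S, of "\<lambda>x. (x, x)"]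
    by simp
  finally show ?thesis using CS unfolding Q_def
    by (meson le_trans mult_le_mono2)
qed


section \<open>Duplicating a row\<close>

definition dup_row :: "(nat \<Rightarrow> nat \<Rightarrow> 'a) \<Rightarrow> nat \<Rightarrow> nat \<Rightarrow> nat \<Rightarrow> 'a" where
  "dup_row B i = (\<lambda>r. B (if r \<le> i then r else r - 1))"

lemma sorted_wrt_take_Suc_append_drop:
  fixes xs ys :: "'b::linorder list"
  assumes "sorted_wrt (<) xs" "sorted_wrt (<) ys" "i < length xs" "i < length ys" "xs ! i < ys ! i"
  shows "sorted_wrt (<) (take (Suc i) xs @ drop i ys)"
proof -
  have "a \<le> xs ! i" if a: "a \<in> set (take (Suc i) xs)" for a
  proof -
    obtain k where "k \<le> i" "a = xs ! k"
      using a assms(3) by (auto simp: in_set_conv_nth less_Suc_eq_le)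
    then show ?thesis
      using sorted_wrt_nth_less[OF assms(1), of k i] assms(3) by (cases "k = i") auto
  qed
  moreover have "ys ! i \<le> b" if b: "b \<in> set (drop i ys)" for b
  proof -
    obtain k where "i \<le> k" "k < length ys" "b = ys ! k"
      using b by (auto simp: in_set_conv_nth) (metis le_add1 less_diff_conv add.commute)
    then show ?thesis
      using sorted_wrt_nth_less[OF assms(2), of i k] by (cases "k = i") auto
  qed
  ultimately show ?thesis
    using assms(1,2,5) by (fastforce simp: sorted_wrt_append sorted_wrt_take sorted_wrt_drop)
qed

lemma nth_take_Suc_append_drop:
  assumes "i < length xs" "r < Suc i + (length ys - i)"
  shows "(take (Suc i) xs @ drop i ys) ! r = (if r \<le> i then xs ! r else ys ! (r - 1))"
proof -
  have "length (take (Suc i) xs) = Suc i" using assms(1) by simp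
  then show ?thesis using assms(2) by (auto simp: nth_append)
qed

lemma take_Suc_append_drop_recover:
  assumes "length xs = length ys" "i < length xs"
    and "take i xs = take i ys" "drop (Suc i) xs = drop (Suc i) ys"
  defines "L \<equiv> take (Suc i) xs @ drop i ys"
  shows "take (Suc i) L @ drop (Suc (Suc i)) L = xs" "take i L @ drop (Suc i) L = ys"
proof -
  have ys: "drop i ys = ys ! i # drop (Suc i) xs"
    using assms(1,2,4) by (simp add: Cons_nth_drop_Suc)
  have "L = take i xs @ xs ! i # ys ! i # drop (Suc i) xs"
    using assms(2) by (simp add: L_def ys take_Suc_conv_app_nth)
  then show "take (Suc i) L @ drop (Suc (Suc i)) L = xs" "take i L @ drop (Suc i) L = ys"
    using assms(1-4) id_take_nth_drop[of i xs] id_take_nth_drop[of i ys]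
    by (simp_all add: take_Suc_conv_app_nth)
qed

lemma take_Suc_append_drop_in_copy_lists:
  assumes "(xs, zs) \<in> copy_lists B h t M n" "(ys, zs) \<in> copy_lists B h t M n"
    and "i < h" "xs ! i < ys ! i"
  shows "(take (Suc i) xs @ drop i ys, zs) \<in> copy_lists (dup_row B i) (Suc h) t M n"
proof -
  have xs: "sorted_wrt (<) xs" "length xs = h" "set xs \<subseteq> {..<n}"
    and ys: "sorted_wrt (<) ys" "length ys = h" "set ys \<subseteq> {..<n}"
    using assms(1,2) by (auto simp: copy_lists_def increasing_lists_def)
  have "set (take (Suc i) xs @ drop i ys) \<subseteq> {..<n}"
    using xs(3) ys(3) set_take_subset[of "Suc i" xs] set_drop_subset[of i ys] by auto
  moreover have "M ((take (Suc i) xs @ drop i ys) ! r) (zs ! j) = dup_row B i r j"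
    if "r < Suc h" "j < t" for r j
    using assms(1,2,3) that xs(2) ys(2)
    by (auto simp: nth_take_Suc_append_drop dup_row_def copy_lists_def)
  ultimately show ?thesis
    using assms(1,3,4) xs ys sorted_wrt_take_Suc_append_drop[OF xs(1) ys(1)]
    by (auto simp: copy_lists_def increasing_lists_def)
qed

lemma density_square_bound:
  fixes N Q W d r :: real
  assumes pairs: "N\<^sup>2 \<le> W * (2 * Q + N)" and dense: "d * r * W \<le> N"
    and big: "4 \<le> d * r" and W: "0 < W"
  shows "d\<^sup>2 / 4 * r\<^sup>2 * W \<le> Q"
proof -
  have N: "0 \<le> N" using dense big W by (smt (verit) mult_pos_pos)
  have "d * r * W * ((d * r - 1) * W) \<le> N * ((d * r - 1) * W)"
    using dense big W by (intro mult_right_mono) auto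
  also have "\<dots> \<le> N * (N - W)"
    using dense big W N by (intro mult_left_mono) (auto simp: algebra_simps)
  also have "\<dots> \<le> W * (2 * Q)" using pairs by (simp add: power2_eq_square algebra_simps)
  finally have "W * (d * r * (d * r - 1) * W) \<le> W * (2 * Q)" by (simp add: algebra_simps)
  then have "d * r * (d * r - 1) * W \<le> 2 * Q" using W by simp
  moreover have "d * r * (d * r / 2) * W \<le> d * r * (d * r - 1) * W"
    using big W by (intro mult_right_mono mult_left_mono) auto
  ultimately show ?thesis by (simp add: power2_eq_square algebra_simps)
qed

definition drop_row_key :: "nat \<Rightarrow> nat list \<times> nat list \<Rightarrow> nat list \<times> nat list \<times> nat list" where
  "drop_row_key i = (\<lambda>(xs, zs). (take i xs, drop (Suc i) xs, zs))"

definition mergeable_pairs ::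
  "nat \<Rightarrow> (nat list \<times> nat list) set \<Rightarrow> ((nat list \<times> nat list) \<times> (nat list \<times> nat list)) set" where
  "mergeable_pairs i S = {(x, y) \<in> S \<times> S. drop_row_key i x = drop_row_key i y \<and> fst x ! i < fst y ! i}"

lemma card_drop_row_key_image_le:
  assumes "i < h"
  shows "card (drop_row_key i ` copy_lists B h t M n) \<le> n ^ (h - 1 + t)"
proof -
  let ?lists = "\<lambda>k. {xs. set xs \<subseteq> {..<n} \<and> length xs = k}"
  have "drop_row_key i ` copy_lists B h t M n \<subseteq> ?lists i \<times> ?lists (h - Suc i) \<times> ?lists t"
  proof
    fix k assume "k \<in> drop_row_key i ` copy_lists B h t M n"
    then obtain xs zs where xs: "(xs, zs) \<in> copy_lists B h t M n"
      and k: "k = (take i xs, drop (Suc i) xs, zs)"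
      unfolding drop_row_key_def by fast
    have "set xs \<subseteq> {..<n}" "length xs = h" "set zs \<subseteq> {..<n}" "length zs = t"
      using xs by (auto simp: copy_lists_def increasing_lists_def)
    then show "k \<in> ?lists i \<times> ?lists (h - Suc i) \<times> ?lists t"
      unfolding k using set_take_subset[of i xs] set_drop_subset[of "Suc i" xs] assms by auto
  qed
  then have "card (drop_row_key i ` copy_lists B h t M n)
      \<le> card (?lists i \<times> ?lists (h - Suc i) \<times> ?lists t)"
    by (rule card_mono[rotated]) (simp add: finite_lists_length_eq)
  also have "\<dots> = n ^ i * (n ^ (h - Suc i) * n ^ t)"
    by (simp add: card_cartesian_product card_lists_length_eq)
  also have "\<dots> = n ^ (h - 1 + t)" using assms by (simp flip: power_add)
  finally show ?thesis .
qed

lemma card_mergeable_pairs_le_copies_dup_row: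
  assumes i: "i < h"
  shows "card (mergeable_pairs i (copy_lists B h t M n)) \<le> copies (dup_row B i) (Suc h) t M n"
proof -
  define S where "S = copy_lists B h t M n"
  define Q where "Q = mergeable_pairs i S"
  have Q_pair: "\<exists>xs ys zs. p = ((xs, zs), (ys, zs)) \<and> (xs, zs) \<in> S \<and> (ys, zs) \<in> S \<and>
      take i xs = take i ys \<and> drop (Suc i) xs = drop (Suc i) ys \<and> xs ! i < ys ! i" if "p \<in> Q" for p
    using that by (auto simp: Q_def mergeable_pairs_def drop_row_key_def)
  have len: "length xs = h" if "(xs, zs) \<in> S" for xs zs
    using that by (simp add: S_def copy_lists_def increasing_lists_def)
  define merge where "merge = (\<lambda>((xs :: nat list, zs :: nat list), (ys :: nat list, _ :: nat list)).
    (take (Suc i) xs @ drop i ys, zs))"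
  have "inj_on merge Q"
  proof (rule inj_onI)
    fix p q assume "p \<in> Q" "q \<in> Q" and merge: "merge p = merge q"
    obtain xs ys zs xs' ys' zs' where
      p: "p = ((xs, zs), (ys, zs))" "(xs, zs) \<in> S" "(ys, zs) \<in> S"
        "take i xs = take i ys" "drop (Suc i) xs = drop (Suc i) ys" and
      q: "q = ((xs', zs'), (ys', zs'))" "(xs', zs') \<in> S" "(ys', zs') \<in> S"
        "take i xs' = take i ys'" "drop (Suc i) xs' = drop (Suc i) ys'"
      using Q_pair[OF \<open>p \<in> Q\<close>] Q_pair[OF \<open>q \<in> Q\<close>] by blast
    have merged_eq: "take (Suc i) xs @ drop i ys = take (Suc i) xs' @ drop i ys'" and "zs = zs'"
      using merge by (simp_all add: p q merge_def)
    have "length xs = h" "length ys = h" "length xs' = h" "length ys' = h"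
      using p q len by auto
    then have "xs = xs'" "ys = ys'"
      using take_Suc_append_drop_recover[of xs ys i] take_Suc_append_drop_recover[of xs' ys' i]
        p(4,5) q(4,5) i merged_eq by metis+
    then show "p = q" using p(1) q(1) \<open>zs = zs'\<close> by simp
  qed
  moreover have "merge ` Q \<subseteq> copy_lists (dup_row B i) (Suc h) t M n"
  proof
    fix m assume "m \<in> merge ` Q"
    then obtain xs ys zs where "m = (take (Suc i) xs @ drop i ys, zs)"
      "(xs, zs) \<in> S" "(ys, zs) \<in> S" "xs ! i < ys ! i"
      using Q_pair by (force simp: merge_def)
    then show "m \<in> copy_lists (dup_row B i) (Suc h) t M n"
      using take_Suc_append_drop_in_copy_lists[OF _ _ i] by (simp add: S_def)
  qed
  ultimately show ?thesis
    unfolding copies_eq_card_copy_lists Q_def S_def by (metis card_inj_on_le finite_copy_lists)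
qed

lemma copies_dup_row_ge:
  fixes B M :: "nat \<Rightarrow> nat \<Rightarrow> 'a" and d :: real
  assumes i: "i < h" and d: "0 < d" and n: "4 / d \<le> real n"
    and dense: "d * real n ^ (h + t) \<le> real (copies B h t M n)"
  shows "d\<^sup>2 / 4 * real n ^ (Suc h + t) \<le> real (copies (dup_row B i) (Suc h) t M n)"
proof -
  define S where "S = copy_lists B h t M n"
  define Q where "Q = mergeable_pairs i S"
  have fiber_inj: "(xs, zs) = (ys, ws)"
    if "(xs, zs) \<in> S" "(ys, ws) \<in> S" "drop_row_key i (xs, zs) = drop_row_key i (ys, ws)"
      and "xs ! i = ys ! i" for xs zs ys ws
  proof -
    have "length xs = h" "length ys = h"
      using that(1,2) by (simp_all add: S_def copy_lists_def increasing_lists_def)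
    then have "xs = take i xs @ xs ! i # drop (Suc i) xs" "ys = take i ys @ ys ! i # drop (Suc i) ys"
      using i by (simp_all add: id_take_nth_drop)
    then show ?thesis using that(3,4) by (simp add: drop_row_key_def)
  qed
  have pairs: "card S ^ 2 \<le> card (drop_row_key i ` S) * (2 * card Q + card S)"
    unfolding Q_def S_def mergeable_pairs_def
    by (rule card_square_le_card_keys_mult_pairs[OF finite_copy_lists])
       (use fiber_inj in \<open>auto simp: S_def\<close>)
  have "0 < real n" using n d by (smt (verit) divide_pos_pos)
  define W where "W = real n ^ (h - 1 + t)"
  obtain k where "h + t = Suc k" "h - 1 + t = k" using i by (intro that[of "h - 1 + t"]) auto
  then have powers: "real n ^ (h + t) = real n * W" "real n ^ (Suc h + t) = (real n)\<^sup>2 * W"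
    by (simp_all add: W_def power2_eq_square)
  have "real (card S ^ 2) \<le> real (card (drop_row_key i ` S) * (2 * card Q + card S))"
    using pairs by (simp only: of_nat_le_iff)
  also have "\<dots> \<le> W * (2 * real (card Q) + real (card S))"
    using card_drop_row_key_image_le[OF i, of B t M n]
    by (simp add: S_def W_def mult_right_mono flip: of_nat_power)
  finally have "(real (card S))\<^sup>2 \<le> W * (2 * real (card Q) + real (card S))" by simp
  moreover have "d * real n * W \<le> real (card S)"
    using dense by (simp add: powers S_def copies_eq_card_copy_lists mult.assoc)
  moreover have "4 \<le> d * real n" using n d by (simp add: field_simps)
  moreover have "0 < W" using \<open>0 < real n\<close> by (simp add: W_def)
  ultimately have "d\<^sup>2 / 4 * (real n)\<^sup>2 * W \<le> real (card Q)"
    by (rule density_square_bound)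
  also have "\<dots> \<le> real (copies (dup_row B i) (Suc h) t M n)"
    using card_mergeable_pairs_le_copies_dup_row[OF i] by (simp add: Q_def S_def)
  finally show ?thesis unfolding powers by (simp only: mult.assoc)
qed


section \<open>Iterated row duplication\<close>

inductive row_dup_steps ::
  "nat \<Rightarrow> (nat \<Rightarrow> nat \<Rightarrow> 'a) \<Rightarrow> nat \<Rightarrow> nat \<Rightarrow> (nat \<Rightarrow> nat \<Rightarrow> 'a) \<Rightarrow> nat \<Rightarrow> bool" for t where
  refl: "row_dup_steps t B h 0 B h"
| dup: "row_dup_steps t B h m C k \<Longrightarrow> i < k \<Longrightarrow>
    (\<And>r j. r < Suc k \<Longrightarrow> j < t \<Longrightarrow> D r j = dup_row C i r j) \<Longrightarrow>
    row_dup_steps t B h (Suc m) D (Suc k)"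

lemma copies_ge_if_row_dup_steps:
  fixes \<epsilon> :: real
  assumes "row_dup_steps t B h m C k" and "0 < \<epsilon>"
    and "\<forall>j<m. (4 / \<epsilon>) ^ 2 ^ j \<le> real n"
    and "\<epsilon> * real n ^ (h + t) \<le> real (copies B h t M n)"
  shows "4 * (\<epsilon> / 4) ^ 2 ^ m * real n ^ (k + t) \<le> real (copies C k t M n)"
  using assms
proof (induction rule: row_dup_steps.induct)
  case (refl B h)
  then show ?case by simp
next
  case (dup B h m C k i D)
  define d where "d = 4 * (\<epsilon> / 4) ^ 2 ^ m"
  have "0 < d" using dup.prems(1) by (simp add: d_def)
  have "4 / d = (4 / \<epsilon>) ^ 2 ^ m" by (simp add: d_def power_divide)
  then have "d\<^sup>2 / 4 * real n ^ (Suc k + t) \<le> real (copies (dup_row C i) (Suc k) t M n)"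
    using dup by (intro copies_dup_row_ge \<open>0 < d\<close>) (auto simp: d_def)
  also have "copies (dup_row C i) (Suc k) t M n = copies D (Suc k) t M n"
    using dup.hyps(3) by (intro copies_cong) auto
  moreover have "d\<^sup>2 / 4 = 4 * (\<epsilon> / 4) ^ 2 ^ Suc m"
    unfolding d_def power_Suc2 power_mult by (simp add: power2_eq_square)
  ultimately show ?case by simp
qed

text \<open>Interpolates between \<open>kept_rows A s t\<close> (\<open>k = 0\<close>) and \<open>[0..<s]\<close> (\<open>k = s\<close>).\<close>

definition kept_rows_from :: "(nat \<Rightarrow> nat \<Rightarrow> 'a) \<Rightarrow> nat \<Rightarrow> nat \<Rightarrow> nat \<Rightarrow> nat list" where
  "kept_rows_from A s t k = [0..<k] @ filter (\<lambda>i. i = 0 \<or> (\<exists>j<t. A i j \<noteq> A (i - 1) j)) [k..<s]"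

lemma row_dup_steps_kept_rows_from:
  assumes "k \<le> s"
  shows "\<exists>m. row_dup_steps t (dedup_rows A s t) (dedup_height A s t) m
    (\<lambda>r. A (kept_rows_from A s t k ! r)) (length (kept_rows_from A s t k))"
  using assms
proof (induction k)
  case 0
  then show ?case
    by (auto simp: kept_rows_from_def kept_rows_def dedup_rows_def dedup_height_def
        intro: row_dup_steps.refl)
next
  case (Suc k)
  then obtain m where IH: "row_dup_steps t (dedup_rows A s t) (dedup_height A s t) m
    (\<lambda>r. A (kept_rows_from A s t k ! r)) (length (kept_rows_from A s t k))" by auto
  define F where "F = filter (\<lambda>i. i = 0 \<or> (\<exists>j<t. A i j \<noteq> A (i - 1) j)) [Suc k..<s]"
  have upt: "[k..<s] = k # [Suc k..<s]" using Suc.prems by (simp add: upt_conv_Cons)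
  show ?case
  proof (cases "k = 0 \<or> (\<exists>j<t. A k j \<noteq> A (k - 1) j)")
    case True
    then have "kept_rows_from A s t (Suc k) = kept_rows_from A s t k"
      by (simp add: kept_rows_from_def upt)
    then show ?thesis using IH by auto
  next
    case False
    then have "0 < k" and dup: "\<And>j. j < t \<Longrightarrow> A k j = A (k - 1) j" by auto
    have old: "kept_rows_from A s t k = [0..<k] @ F"
      and new: "kept_rows_from A s t (Suc k) = [0..<k] @ k # F"
      using False by (simp_all add: kept_rows_from_def upt F_def)
    have "A (([0..<k] @ k # F) ! r) j = dup_row (\<lambda>r. A (([0..<k] @ F) ! r)) (k - 1) r j"
      if "j < t" for r j
    proof -
      consider "r < k" | "r = k" | "k < r" by linarith
      then show ?thesis
        by cases (use \<open>0 < k\<close> dup[OF that] in \<open>auto simp: dup_row_def nth_append nth_Cons'\<close>)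
    qed
    then have "row_dup_steps t (dedup_rows A s t) (dedup_height A s t) (Suc m)
      (\<lambda>r. A (([0..<k] @ k # F) ! r)) (Suc (length ([0..<k] @ F)))"
      using IH \<open>0 < k\<close> by (intro row_dup_steps.dup[where i = "k - 1"]) (auto simp: old)
    then show ?thesis by (auto simp: new)
  qed
qed

lemma poly_sum_monom_ge:
  fixes c :: "nat \<Rightarrow> real"
  assumes "j \<in> J" "finite J" "0 \<le> x" "\<And>k. k \<in> J \<Longrightarrow> 0 \<le> c k"
  shows "c j * x ^ d j \<le> poly (\<Sum>k\<in>J. monom (c k) (d k)) x"
  unfolding poly_sum poly_monom using assms by (intro member_le_sum) auto

theorem lemma3p2:
  fixes A :: "nat \<Rightarrow> nat \<Rightarrow> 'a::finite" and s t :: nat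
  shows "\<exists>p1 p2 :: real poly. (\<forall>x>0. poly p2 x > 0) \<and>
    (\<forall>\<epsilon>::real. \<epsilon> > 0 \<longrightarrow>
      (\<forall>n::nat. real n \<ge> poly p1 (1 / \<epsilon>) \<longrightarrow>
        (\<forall>M :: nat \<Rightarrow> nat \<Rightarrow> 'a.
           real (copies (dedup_rows A s t) (dedup_height A s t) t M n)
             \<ge> \<epsilon> * real n ^ (dedup_height A s t + t)
           \<longrightarrow> real (copies A s t M n) \<ge> (1 / poly p2 (1 / \<epsilon>)) * real n ^ (s + t))))"
proof -
  obtain m where steps:
      "row_dup_steps t (dedup_rows A s t) (dedup_height A s t) m (\<lambda>r. A ([0..<s] ! r)) s"
    using row_dup_steps_kept_rows_from[where k = s and s = s and A = A and t = t]
    by (auto simp: kept_rows_from_def)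
  define p1 where "p1 = (\<Sum>j<m. monom (4 ^ 2 ^ j) (2 ^ j) :: real poly)"
  define p2 where "p2 = (monom (4 ^ 2 ^ m / 4) (2 ^ m) :: real poly)"
  have "\<forall>x>0. poly p2 x > 0" by (simp add: p2_def poly_monom)
  moreover have "real (copies A s t M n) \<ge> (1 / poly p2 (1 / \<epsilon>)) * real n ^ (s + t)"
    if \<epsilon>: "0 < \<epsilon>" and n: "poly p1 (1 / \<epsilon>) \<le> real n"
      and dense: "\<epsilon> * real n ^ (dedup_height A s t + t)
        \<le> real (copies (dedup_rows A s t) (dedup_height A s t) t M n)"
    for \<epsilon> :: real and n :: nat and M :: "nat \<Rightarrow> nat \<Rightarrow> 'a"
  proof -
    have "(4 / \<epsilon>) ^ 2 ^ j \<le> poly p1 (1 / \<epsilon>)" if "j < m" for j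
      using poly_sum_monom_ge[of j "{..<m}" "1 / \<epsilon>" "\<lambda>k. 4 ^ 2 ^ k" "\<lambda>k. 2 ^ k"] that \<epsilon>
      by (simp add: p1_def power_divide)
    then have "\<forall>j<m. (4 / \<epsilon>) ^ 2 ^ j \<le> real n" using n by force
    then have "4 * (\<epsilon> / 4) ^ 2 ^ m * real n ^ (s + t) \<le> real (copies (\<lambda>r. A ([0..<s] ! r)) s t M n)"
      using copies_ge_if_row_dup_steps[OF steps \<epsilon>] dense by blast
    also have "copies (\<lambda>r. A ([0..<s] ! r)) s t M n = copies A s t M n"
      by (intro copies_cong) simp
    also have "4 * (\<epsilon> / 4) ^ 2 ^ m = 1 / poly p2 (1 / \<epsilon>)"
      by (simp add: p2_def poly_monom power_divide)
    finally show ?thesis .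
  qed
  ultimately show ?thesis by blast
qed

end
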